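(* Let $d\ge 2$ and $n\ge1$ be integers, let $\mathcal{S}^*\subseteq\{1,\dots,d\}$, let $a_{1:n}\in(\{0,1\}^d)^n$ be arbitrary, and let $x_t:=h_{\mathcal{S}^*}(a_t)$ for $t=1,\dots,n$. Then the cumulative log-loss of the predictor $\zeta_d$ satisfies $\mathcal{L}_n(\zeta_d)=-\log_2\prod_{t=1}^n\zeta_d(x_t\mid x_{<t};a_{1:t})\le 2d^2$.
   Context: For $\mathcal{S}\subseteq\{1,\dots,d\}$ and $a\in\{0,1\}^d$, $h_{\mathcal{S}}(a)=\bigwedge_{i\in\mathcal{S}}a^i$ (equal to $1$ if $\mathcal{S}=\emptyset$), where $a^i$ is the $i$-th component of $a$. The predictor $\zeta_d$ is defined as follows, with $\alpha:=2^{-d/2^d}$. At time $t$, let $\mathcal{A}_t:=\{a_\tau:\tau<t,\ x_\tau=0\}$ (the set of previously seen negative inputs) and, for $i=1,\dots,d$, let $w_i:=\prod_{\tau<t:\,x_\tau=1}a_\tau^i$ (equal to $1$ if there is no such $\tau$). If $a_t\in\mathcal{A}_t$, then $\zeta_d(0\mid x_{<t};a_{1:t})=1$ and $\zeta_d(1\mid x_{<t};a_{1:t})=0$. Otherwise $$\zeta_d(1\mid x_{<t};a_{1:t})=\prod_{i=1}^d\frac{(1-\alpha)+\alpha w_i a_t^i}{(1-\alpha)+\alpha w_i},\qquad \zeta_d(0\mid x_{<t};a_{1:t})=1-\zeta_d(1\mid x_{<t};a_{1:t}).$$ *)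

theory Defs
  imports Complex_Main
begin

text \<open>Binary input vectors a_t in {0,1}^d are modelled as functions nat => bool,
  of which only components 1..d are relevant. A sequence a_{1:n} is a function
  nat => (nat => bool), indexed by times t = 1..n. Labels x_t are booleans (1 = True).\<close>

definition h :: "nat set \<Rightarrow> (nat \<Rightarrow> bool) \<Rightarrow> bool" where
  "h S v = (\<forall>i\<in>S. v i)"

definition bit :: "bool \<Rightarrow> real" where
  "bit b = (if b then 1 else 0)"

definition zeta_alpha :: "nat \<Rightarrow> real" where
  "zeta_alpha d = 2 powr (- real d / 2 ^ d)"

definition in_neg :: "nat \<Rightarrow> (nat \<Rightarrow> bool) \<Rightarrow> (nat \<Rightarrow> nat \<Rightarrow> bool) \<Rightarrow> nat \<Rightarrow> bool" where
  "in_neg d x a t = (\<exists>\<tau>\<in>{1..<t}. \<not> x \<tau> \<and> (\<forall>i\<in>{1..d}. a \<tau> i = a t i))"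

definition wgt :: "(nat \<Rightarrow> bool) \<Rightarrow> (nat \<Rightarrow> nat \<Rightarrow> bool) \<Rightarrow> nat \<Rightarrow> nat \<Rightarrow> real" where
  "wgt x a t i = (\<Prod>\<tau>\<in>{\<tau>\<in>{1..<t}. x \<tau>}. bit (a \<tau> i))"

definition zeta1 :: "nat \<Rightarrow> (nat \<Rightarrow> bool) \<Rightarrow> (nat \<Rightarrow> nat \<Rightarrow> bool) \<Rightarrow> nat \<Rightarrow> real" where
  "zeta1 d x a t =
     (if in_neg d x a t then 0
      else (\<Prod>i\<in>{1..d}. ((1 - zeta_alpha d) + zeta_alpha d * wgt x a t i * bit (a t i))
                          / ((1 - zeta_alpha d) + zeta_alpha d * wgt x a t i)))"

definition zeta :: "nat \<Rightarrow> bool \<Rightarrow> (nat \<Rightarrow> bool) \<Rightarrow> (nat \<Rightarrow> nat \<Rightarrow> bool) \<Rightarrow> nat \<Rightarrow> real" where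
  "zeta d b x a t = (if b then zeta1 d x a t else 1 - zeta1 d x a t)"

end

theory Submission
  imports Defs
begin

text \<open>
  Proof idea (potential function).  Write \<alpha> = zeta_alpha d and c = 1 - \<alpha>.  At time t let
  alive t be the coordinates i \<in> {1..d} that every earlier positive input has switched on
  (the candidates for S), and neg_seen t the set of on-patterns of earlier negative inputs.
  The potential  \<Phi> t = \<alpha>^|neg_seen t| / c^|alive t|  satisfies \<Phi>(t+1) \<le> \<zeta>_t \<Phi>(t) for every
  realizable label: a positive step removes exactly the coordinates it charges c for, a
  repeated negative is predicted with certainty, and a new negative costs at most \<alpha> while
  adding one pattern.  Telescoping gives  \<Prod>\<zeta>_t \<ge> \<Phi>(n+1)/\<Phi>(1) \<ge> c^d \<alpha>^(2^d), because there are
  at most 2^d patterns and \<Phi>(1) = c^(-d).  Finally \<alpha>^(2^d) = 2^(-d) and c \<ge> 2^(-(2d-1)),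
  so the product is at least 2^(-2d^2).
\<close>

section \<open>The parameter \<alpha>\<close>

lemma double_le_two_power: "2 \<le> d \<Longrightarrow> 2 * d \<le> (2::nat) ^ d"
  by (induction d rule: dec_induct) auto

text \<open>Growth estimate behind the lower bound on 1 - \<alpha>.\<close>
lemma two_power_estimate: "2 \<le> d \<Longrightarrow> 2 ^ (d + 3) \<le> d * (2::nat) ^ (2 * d)"
proof (induction d rule: dec_induct)
  case (step m)
  have "2 ^ (Suc m + 3) = 2 * (2::nat) ^ (m + 3)" by (simp del: power_Suc add: power_Suc[symmetric])
  also have "\<dots> \<le> 2 * (m * 2 ^ (2 * m))" using step by simp
  also have "\<dots> \<le> Suc m * 2 ^ (2 * Suc m)" by (simp add: power_add)
  finally show ?case .
qed simp

lemma zeta_alpha_powr: "zeta_alpha d = 2 powr (- (real d / 2 ^ d))"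
  by (simp add: zeta_alpha_def)

lemma zeta_alpha_bounds:
  assumes "1 \<le> d"
  shows "0 < zeta_alpha d" "zeta_alpha d < 1"
  using assms powr_less_mono[of "- (real d / 2 ^ d)" 0 2] by (auto simp: zeta_alpha_powr)

text \<open>\<alpha> is chosen so that the worst case of 2^d distinct negative patterns costs 2^(-d).\<close>
lemma zeta_alpha_power: "zeta_alpha d ^ (2 ^ d) = 1 / 2 ^ d"
  by (simp add: zeta_alpha_powr powr_power powr_minus powr_realpow divide_simps)

lemma one_minus_zeta_alpha_ge:
  assumes "2 \<le> d"
  shows "1 / 2 ^ (2 * d - 1) \<le> 1 - zeta_alpha d"
proof -
  define y where "y = real d / 2 ^ d"
  have y0: "0 < y" using assms by (simp add: y_def)
  have "real (2 * d) \<le> real (2 ^ d)" using double_le_two_power[OF assms] by linarith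
  hence y1: "y \<le> 1 / 2" by (simp add: y_def field_simps)
  have ln2: "1 / 2 \<le> ln (2::real)"
    using ln_le_minus_one[of "1 / 2 :: real"] by (simp add: ln_div)
  have "1 + y / 2 \<le> 1 + y * ln 2" using ln2 y0 by (simp add: mult_left_mono)
  also have "\<dots> \<le> exp (y * ln 2)" by (rule exp_ge_add_one_self)
  also have "\<dots> = 2 powr y" by (simp add: powr_def)
  finally have "1 + y / 2 \<le> 2 powr y" .
  hence "1 / 2 powr y \<le> 1 / (1 + y / 2)" using y0 by (intro divide_left_mono) auto
  moreover have "zeta_alpha d = 1 / 2 powr y" by (simp add: zeta_alpha_powr y_def powr_minus_divide)
  ultimately have "zeta_alpha d \<le> 1 / (1 + y / 2)" by simp
  moreover have "y / 4 \<le> 1 - 1 / (1 + y / 2)" using y0 y1 by (simp add: field_simps)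
  moreover have "1 / 2 ^ (2 * d - 1) \<le> y / 4"
  proof -
    have "real (2 ^ (d + 3)) \<le> real (d * 2 ^ (2 * d))" using two_power_estimate[OF assms] by linarith
    moreover have "(2::real) ^ (2 * d) = 2 * 2 ^ (2 * d - 1)"
    proof -
      have "2 * d = Suc (2 * d - 1)" using assms by simp
      thus ?thesis by (metis power_Suc)
    qed
    ultimately show ?thesis by (simp add: y_def divide_simps power_add mult.commute)
  qed
  ultimately show ?thesis by linarith
qed

text \<open>The lower bound on the product of the predictions, in closed form.\<close>
lemma zeta_alpha_budget:
  assumes "2 \<le> d"
  shows "1 / 2 ^ (2 * d ^ 2) \<le> (1 - zeta_alpha d) ^ d * zeta_alpha d ^ (2 ^ d)"
proof -
  have "(1 / 2 ^ (2 * d - 1)) ^ d \<le> (1 - zeta_alpha d) ^ d"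
    using one_minus_zeta_alpha_ge[OF assms] by (intro power_mono) auto
  hence "(1 / 2 ^ (2 * d - 1)) ^ d * (1 / 2 ^ d) \<le> (1 - zeta_alpha d) ^ d * zeta_alpha d ^ (2 ^ d)"
    by (simp add: zeta_alpha_power divide_right_mono)
  moreover have "(2 * d - 1) * d + d = 2 * d ^ 2"
    using assms by (simp add: power2_eq_square algebra_simps)
  hence "(1 / 2 ^ (2 * d - 1)) ^ d * (1 / 2 ^ d) = (1::real) / 2 ^ (2 * d ^ 2)"
    by (metis power_add power_mult power_one_over)
  ultimately show ?thesis by simp
qed

section \<open>Combinatorial description of the predictor\<close>

text \<open>Coordinates switched on by every positive input before time t: the candidates for S.\<close>
definition alive :: "nat \<Rightarrow> (nat \<Rightarrow> bool) \<Rightarrow> (nat \<Rightarrow> nat \<Rightarrow> bool) \<Rightarrow> nat \<Rightarrow> nat set" where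
  "alive d x a t = {i \<in> {1..d}. \<forall>\<tau>\<in>{1..<t}. x \<tau> \<longrightarrow> a \<tau> i}"

definition pattern :: "nat \<Rightarrow> (nat \<Rightarrow> bool) \<Rightarrow> nat set" where
  "pattern d v = {i \<in> {1..d}. v i}"

definition neg_seen :: "nat \<Rightarrow> (nat \<Rightarrow> bool) \<Rightarrow> (nat \<Rightarrow> nat \<Rightarrow> bool) \<Rightarrow> nat \<Rightarrow> nat set set" where
  "neg_seen d x a t = (\<lambda>\<tau>. pattern d (a \<tau>)) ` {\<tau> \<in> {1..<t}. \<not> x \<tau>}"

lemma wgt_eq_bit: "wgt x a t i = bit (\<forall>\<tau>\<in>{1..<t}. x \<tau> \<longrightarrow> a \<tau> i)"
proof (cases "\<forall>\<tau>\<in>{1..<t}. x \<tau> \<longrightarrow> a \<tau> i")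
  case True
  then show ?thesis unfolding wgt_def by (auto simp: bit_def intro!: prod.neutral)
next
  case False
  then obtain \<tau> where "\<tau> \<in> {1..<t}" "x \<tau>" "\<not> a \<tau> i" by auto
  then show ?thesis unfolding wgt_def using False by (auto simp: bit_def intro!: prod_zero)
qed

lemma zeta1_eq_power:
  assumes "1 \<le> d" and "\<not> in_neg d x a t"
  shows "zeta1 d x a t = (1 - zeta_alpha d) ^ card (alive d x a t - {i. a t i})"
proof -
  define c where "c = 1 - zeta_alpha d"
  have c0: "0 < c" using zeta_alpha_bounds[OF assms(1)] by (simp add: c_def)
  have factor: "(c + zeta_alpha d * bit w * bit b) / (c + zeta_alpha d * bit w)
      = (if w \<and> \<not> b then c else 1)" for w b
    using c0 by (auto simp: bit_def c_def)
  have "zeta1 d x a t = (\<Prod>i\<in>{1..d}. if i \<in> alive d x a t - {i. a t i} then c else 1)"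
    unfolding zeta1_def wgt_eq_bit using assms(2)
    by (auto simp: factor[unfolded c_def] c_def alive_def intro!: prod.cong)
  also have "\<dots> = c ^ card (alive d x a t - {i. a t i})"
  proof -
    have "{1..d} \<inter> {i \<in> alive d x a t. \<not> a t i} = alive d x a t - {i. a t i}"
      unfolding alive_def by auto
    thus ?thesis by (simp add: prod.If_cases)
  qed
  finally show ?thesis by (simp add: c_def)
qed

lemma in_neg_iff_pattern: "in_neg d x a t \<longleftrightarrow> pattern d (a t) \<in> neg_seen d x a t"
proof -
  have "(\<forall>i\<in>{1..d}. a \<tau> i = a t i) \<longleftrightarrow> pattern d (a t) = pattern d (a \<tau>)" for \<tau>
    unfolding pattern_def by blast
  thus ?thesis unfolding in_neg_def neg_seen_def by blast
qed

lemma alive_Suc: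
  "1 \<le> t \<Longrightarrow>
    alive d x a (Suc t) = (if x t then alive d x a t \<inter> {i. a t i} else alive d x a t)"
  unfolding alive_def by (auto simp: less_Suc_eq)

lemma neg_seen_Suc:
  "1 \<le> t \<Longrightarrow> neg_seen d x a (Suc t) =
    (if x t then neg_seen d x a t else insert (pattern d (a t)) (neg_seen d x a t))"
  unfolding neg_seen_def by (auto simp: less_Suc_eq)

lemma finite_alive: "finite (alive d x a t)"
  unfolding alive_def by simp

lemma alive_one: "alive d x a 1 = {1..d}"
  unfolding alive_def by auto

lemma neg_seen_one: "neg_seen d x a 1 = {}"
  unfolding neg_seen_def by auto

lemma card_neg_seen_le: "card (neg_seen d x a t) \<le> 2 ^ d"
proof -
  have "neg_seen d x a t \<subseteq> Pow {1..d}" unfolding neg_seen_def pattern_def by auto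
  hence "card (neg_seen d x a t) \<le> card (Pow {1..d})" by (intro card_mono) auto
  thus ?thesis by (simp add: card_Pow)
qed

section \<open>The potential and the one-step inequality\<close>

lemma subset_alive:
  assumes "S \<subseteq> {1..d}" and "\<And>\<tau>. \<tau> \<in> {1..<t} \<Longrightarrow> x \<tau> = h S (a \<tau>)"
  shows "S \<subseteq> alive d x a t"
  using assms unfolding alive_def h_def by auto

lemma positive_not_in_neg:
  assumes "S \<subseteq> {1..d}" and "\<And>\<tau>. \<tau> \<in> {1..t} \<Longrightarrow> x \<tau> = h S (a \<tau>)" and "1 \<le> t" and "x t"
  shows "\<not> in_neg d x a t"
proof
  assume "in_neg d x a t"
  then obtain \<tau> where "\<tau> \<in> {1..<t}" "\<not> x \<tau>" "\<forall>i\<in>{1..d}. a \<tau> i = a t i"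
    unfolding in_neg_def by auto
  with assms show False unfolding h_def by fastforce
qed

definition potential :: "nat \<Rightarrow> (nat \<Rightarrow> bool) \<Rightarrow> (nat \<Rightarrow> nat \<Rightarrow> bool) \<Rightarrow> nat \<Rightarrow> real" where
  "potential d x a t = zeta_alpha d ^ card (neg_seen d x a t) / (1 - zeta_alpha d) ^ card (alive d x a t)"

lemma potential_pos: "1 \<le> d \<Longrightarrow> 0 < potential d x a t"
  using zeta_alpha_bounds[of d] by (simp add: potential_def)

lemma potential_one: "potential d x a 1 = 1 / (1 - zeta_alpha d) ^ d"
  unfolding potential_def alive_one neg_seen_one by simp

lemma potential_ge:
  assumes "1 \<le> d"
  shows "zeta_alpha d ^ (2 ^ d) \<le> potential d x a t"
proof -
  note \<alpha> = zeta_alpha_bounds[OF assms]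
  have "zeta_alpha d ^ (2 ^ d) \<le> zeta_alpha d ^ card (neg_seen d x a t)"
    using \<alpha> card_neg_seen_le by (intro power_decreasing) auto
  also have "\<dots> \<le> potential d x a t"
  proof -
    have "zeta_alpha d ^ card (neg_seen d x a t) * (1 - zeta_alpha d) ^ card (alive d x a t)
        \<le> zeta_alpha d ^ card (neg_seen d x a t)"
      using \<alpha> by (intro mult_left_le) (auto intro: power_le_one)
    thus ?thesis unfolding potential_def using \<alpha> by (simp add: le_divide_eq)
  qed
  finally show ?thesis .
qed

lemma potential_step:
  assumes "1 \<le> d" and "S \<subseteq> {1..d}" and "\<And>\<tau>. \<tau> \<in> {1..t} \<Longrightarrow> x \<tau> = h S (a \<tau>)" and "1 \<le> t"
  shows "potential d x a (Suc t) \<le> zeta d (x t) x a t * potential d x a t"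
proof -
  define c where "c = 1 - zeta_alpha d"
  define K where "K = alive d x a t - {i. a t i}"
  have c0: "0 < c" and c1: "c < 1" using zeta_alpha_bounds[OF assms(1)] by (auto simp: c_def)
  have finK: "finite K" unfolding K_def alive_def by simp
  show ?thesis
  proof (cases "x t")
    case True
    have alive: "alive d x a t = alive d x a (Suc t) \<union> K" "alive d x a (Suc t) \<inter> K = {}"
      using alive_Suc[OF assms(4)] True unfolding K_def by auto
    hence "card (alive d x a t) = card (alive d x a (Suc t)) + card K"
      using card_Un_disjoint[OF finite_alive finK] by simp
    hence "potential d x a t = potential d x a (Suc t) / c ^ card K"
      using True neg_seen_Suc[OF assms(4)] by (simp add: potential_def c_def power_add)
    moreover have "\<not> in_neg d x a t"
      using positive_not_in_neg[of S d t x a] assms(2-4) True by blast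
    hence "zeta d (x t) x a t = c ^ card K"
      using True zeta1_eq_power[OF assms(1)] by (simp add: zeta_def c_def K_def)
    ultimately show ?thesis using c0 by simp
  next
    case negative: False
    have alive: "alive d x a (Suc t) = alive d x a t" using alive_Suc[OF assms(4)] negative by simp
    show ?thesis
    proof (cases "in_neg d x a t")
      case True
      have "neg_seen d x a (Suc t) = neg_seen d x a t"
        using negative True neg_seen_Suc[OF assms(4)] in_neg_iff_pattern by (simp add: insert_absorb)
      moreover have "zeta d (x t) x a t = 1" using negative True by (simp add: zeta_def zeta1_def)
      ultimately show ?thesis using alive by (simp add: potential_def)
    next
      case new: False
      have "card (neg_seen d x a (Suc t)) = Suc (card (neg_seen d x a t))"
        using neg_seen_Suc[OF assms(4)] negative new in_neg_iff_pattern
        by (simp add: neg_seen_def)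
      hence pot: "potential d x a (Suc t) = zeta_alpha d * potential d x a t"
        using alive by (simp add: potential_def)
      obtain i where "i \<in> S" "\<not> a t i" using negative assms(3,4) unfolding h_def by auto
      hence "i \<in> K" using subset_alive[OF assms(2), of t x a] assms(3) unfolding K_def by auto
      hence "1 \<le> card K" using finK by (auto simp: Suc_le_eq card_gt_0_iff)
      hence "c ^ card K \<le> c" using c0 c1 power_decreasing[of 1 "card K" c] by simp
      hence "zeta_alpha d \<le> zeta d (x t) x a t"
        using negative zeta1_eq_power[OF assms(1) new] by (simp add: zeta_def c_def K_def)
      then show ?thesis
        using pot mult_right_mono[of _ _ "potential d x a t"] potential_pos[OF assms(1), of x a t]
        by simp
    qed
  qed
qed

section \<open>Telescoping and the regret bound\<close>

text \<open>If a positive sequence shrinks at step t by at most the factor z t, then the product of the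
  factors dominates the total shrinkage; positivity of \<Phi> forces the factors to be positive.\<close>
lemma telescoping_bound:
  fixes \<Phi> z :: "nat \<Rightarrow> real"
  assumes pos: "\<And>t. 0 < \<Phi> t" and step: "\<And>t. t \<in> {1..n} \<Longrightarrow> \<Phi> (Suc t) \<le> z t * \<Phi> t"
  shows "\<Phi> (Suc n) \<le> (\<Prod>t\<in>{1..n}. z t) * \<Phi> 1"
  using step
proof (induction n)
  case (Suc n)
  have step_n: "\<Phi> (Suc (Suc n)) \<le> z (Suc n) * \<Phi> (Suc n)" using Suc.prems by simp
  have "0 < z (Suc n) * \<Phi> (Suc n)" using pos[of "Suc (Suc n)"] step_n by (rule less_le_trans)
  hence "0 < z (Suc n)" using pos[of "Suc n"] by (rule zero_less_mult_pos2)
  moreover have "\<Phi> (Suc n) \<le> (\<Prod>t\<in>{1..n}. z t) * \<Phi> 1" using Suc by simp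
  ultimately have "z (Suc n) * \<Phi> (Suc n) \<le> z (Suc n) * ((\<Prod>t\<in>{1..n}. z t) * \<Phi> 1)" by simp
  with step_n show ?case by (simp add: prod.nat_ivl_Suc' mult_ac)
qed simp

lemma minus_log2_le:
  assumes "1 / 2 ^ k \<le> (P::real)"
  shows "0 < P" and "- log 2 P \<le> k"
proof -
  show "0 < P" using assms by (rule less_le_trans[rotated]) simp
  hence "log 2 (1 / 2 ^ k) \<le> log 2 P" using assms by (subst log_le_cancel_iff) auto
  thus "- log 2 P \<le> k" by (simp add: log_divide log_nat_power)
qed

theorem theorem4:
  fixes d n :: nat and S :: "nat set" and a :: "nat \<Rightarrow> nat \<Rightarrow> bool" and x :: "nat \<Rightarrow> bool"
  assumes "d \<ge> 2" and "n \<ge> 1" and "S \<subseteq> {1..d}"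
    and "\<And>t. t \<in> {1..n} \<Longrightarrow> x t = h S (a t)"
  shows "(\<Prod>t\<in>{1..n}. zeta d (x t) x a t) > 0
         \<and> - log 2 (\<Prod>t\<in>{1..n}. zeta d (x t) x a t) \<le> 2 * real d ^ 2"
proof -
  define P where "P = (\<Prod>t\<in>{1..n}. zeta d (x t) x a t)"
  define c where "c = 1 - zeta_alpha d"
  have d1: "1 \<le> d" using assms(1) by simp
  have c0: "0 < c" using zeta_alpha_bounds[OF d1] by (simp add: c_def)
  have "potential d x a (Suc t) \<le> zeta d (x t) x a t * potential d x a t" if "t \<in> {1..n}" for t
    using potential_step[OF d1 assms(3), of t x a] assms(4) that by simp
  hence "potential d x a (Suc n) \<le> P * potential d x a 1"
    unfolding P_def by (rule telescoping_bound[OF potential_pos[OF d1]])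
  also have "\<dots> = P / c ^ d" unfolding potential_one c_def by simp
  finally have "zeta_alpha d ^ (2 ^ d) \<le> P / c ^ d"
    using potential_ge[OF d1, of x a "Suc n"] by linarith
  hence "c ^ d * zeta_alpha d ^ (2 ^ d) \<le> P" using c0 by (simp add: le_divide_eq mult.commute)
  hence "1 / 2 ^ (2 * d ^ 2) \<le> P" using zeta_alpha_budget[OF assms(1)] by (simp add: c_def)
  from minus_log2_le[OF this] show ?thesis by (simp add: P_def)
qed

end
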